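(* Let $\mathbb{W}$ be a union of lines and ACM points in $\mathbb{P}^1\times\mathbb{P}^1$ and let $\mathcal{G}(I_{\mathbb{W}})$ be its standard generating set. Then for any nonempty subset $S\subseteq\mathcal{G}(I_{\mathbb{W}})$, the ideal $\langle S\rangle$ is the defining ideal of a union of lines and ACM points (allowing the cases where it consists only of lines or only of points).
   Context: $R=\mathbb{C}[x_0,x_1,y_0,y_1]$ is bigraded with $\deg x_i=(1,0)$, $\deg y_i=(0,1)$. For $A=[a_0:a_1]\in\mathbb{P}^1$ let $H_A=a_1x_0-a_0x_1$ and for $B=[b_0:b_1]$ let $V_B=b_1y_0-b_0y_1$; the same symbol denotes the form and its zero set (horizontal, resp. vertical, line or ruling). $I_{A\times B}=\langle H_A,V_B\rangle$, $I_{\mathbb{X}}=\bigcap_{P\in\mathbb{X}}I_P$, and a finite set $\mathbb{X}$ is ACM if $R/I_{\mathbb{X}}$ is Cohen–Macaulay. A union of lines and points is $\mathbb{W}=\{P_1,\dots,P_r,H_1,\dots,H_t,V_1,\dots,V_p\}$ (distinct points, horizontal lines and vertical lines, no point on any of the lines), with $\mathbb{X}_{\mathbb{W}}=\{P_1,\dots,P_r\}$ and $I_{\mathbb{W}}=\bigcap_iI_{P_i}\cap\bigcap_i\langle H_i\rangle\cap\bigcap_j\langle V_j\rangle$; it is a union of lines and ACM points if $\mathbb{X}_{\mathbb{W}}$ is ACM. For ACM $\mathbb{X}$ with $\pi_1(\mathbb{X})=\{A_1,\dots,A_h\}$, $\pi_2(\mathbb{X})=\{B_1,\dots,B_v\}$,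 labelled so that $\alpha_i=|\{P\in\mathbb{X}:P\in H_{A_i}\}|$ satisfies $\alpha_1\ge\cdots\ge\alpha_h$ and the counts on $V_{B_j}$ are nonincreasing, $I_{\mathbb{X}}$ is minimally generated by $\{H_{A_1}\cdots H_{A_h},\ V_{B_1}\cdots V_{B_v}\}\cup\{H_{A_1}\cdots H_{A_i}V_{B_1}\cdots V_{B_{\alpha_{i+1}}}:\alpha_{i+1}<\alpha_i\}$ (unique up to nonzero scalars). The standard generating set of $I_{\mathbb{W}}$ is this set for $\mathbb{X}=\mathbb{X}_{\mathbb{W}}$, each element multiplied by $\Lambda=\prod_iH_i\prod_jV_j$ (and $\{\Lambda\}$ if $\mathbb{X}_{\mathbb{W}}=\emptyset$); it is a minimal generating set of $I_{\mathbb{W}}$. *)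

theory Defs
  imports Complex_Main "HOL-Library.Poly_Mapping"
begin

datatype var = X0 | X1 | Y0 | Y1

type_synonym R = "(var \<Rightarrow>\<^sub>0 nat) \<Rightarrow>\<^sub>0 complex"

definition pvar :: "var \<Rightarrow> R" where
  "pvar v = Poly_Mapping.single (Poly_Mapping.single v 1) 1"

definition pconst :: "complex \<Rightarrow> R" where
  "pconst c = Poly_Mapping.single 0 c"

definition ideal_gen :: "R set \<Rightarrow> R set" where
  "ideal_gen S = {p. \<exists>F r. finite F \<and> F \<subseteq> S \<and> p = (\<Sum>f\<in>F. r f * f)}"

text \<open>A point of P^1 is encoded by its normalized homogeneous coordinates:
  None is [0:1] and Some t is [1:t]. This is a bijection with P^1(C).\<close>
type_synonym p1 = "complex option"

definition coords :: "p1 \<Rightarrow> complex \<times> complex" where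
  "coords A = (case A of None \<Rightarrow> (0, 1) | Some t \<Rightarrow> (1, t))"

definition Hform :: "p1 \<Rightarrow> R" where
  "Hform A = pconst (snd (coords A)) * pvar X0 - pconst (fst (coords A)) * pvar X1"

definition Vform :: "p1 \<Rightarrow> R" where
  "Vform B = pconst (snd (coords B)) * pvar Y0 - pconst (fst (coords B)) * pvar Y1"

definition I_pt :: "p1 \<times> p1 \<Rightarrow> R set" where
  "I_pt P = ideal_gen {Hform (fst P), Vform (snd P)}"

definition I_X :: "(p1 \<times> p1) set \<Rightarrow> R set" where
  "I_X X = {p. \<forall>P\<in>X. p \<in> I_pt P}"

definition irrel :: "R set" where
  "irrel = ideal_gen {pvar X0, pvar X1, pvar Y0, pvar Y1}"

definition regular_seq2 :: "R set \<Rightarrow> R \<Rightarrow> R \<Rightarrow> bool" where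
  "regular_seq2 I f1 f2 \<longleftrightarrow>
     f1 \<in> irrel \<and> f2 \<in> irrel \<and>
     (\<forall>g. f1 * g \<in> I \<longrightarrow> g \<in> I) \<and>
     (\<forall>g. f2 * g \<in> ideal_gen (I \<union> {f1}) \<longrightarrow> g \<in> ideal_gen (I \<union> {f1})) \<and>
     1 \<notin> ideal_gen (I \<union> {f1, f2})"

text \<open>R/I_X is Cohen-Macaulay. For a nonempty finite set of points of P^1 x P^1,
  dim R/I_X = 2, so CM means depth_m(R/I_X) >= 2, i.e. there is an R/I_X-regular
  sequence of length 2 in m. For the empty set R/I_X = 0 (CM by convention).\<close>
definition ACM :: "(p1 \<times> p1) set \<Rightarrow> bool" where
  "ACM X \<longleftrightarrow> finite X \<and> (X = {} \<or> (\<exists>f1 f2. regular_seq2 (I_X X) f1 f2))"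

record ULP =
  pts :: "(p1 \<times> p1) set"
  hlines :: "p1 set"
  vlines :: "p1 set"

definition is_ULP :: "ULP \<Rightarrow> bool" where
  "is_ULP W \<longleftrightarrow> finite (pts W) \<and> finite (hlines W) \<and> finite (vlines W) \<and>
     (\<forall>P\<in>pts W. fst P \<notin> hlines W \<and> snd P \<notin> vlines W)"

definition is_ULACM :: "ULP \<Rightarrow> bool" where
  "is_ULACM W \<longleftrightarrow> is_ULP W \<and> ACM (pts W)"

definition I_W :: "ULP \<Rightarrow> R set" where
  "I_W W = I_X (pts W) \<inter> {p. (\<forall>A\<in>hlines W. p \<in> ideal_gen {Hform A}) \<and>
                               (\<forall>B\<in>vlines W. p \<in> ideal_gen {Vform B})}"

definition Lambda :: "ULP \<Rightarrow> R" where
  "Lambda W = (\<Prod>A\<in>hlines W. Hform A) * (\<Prod>B\<in>vlines W. Vform B)"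

definition row_count :: "(p1 \<times> p1) set \<Rightarrow> p1 \<Rightarrow> nat" where
  "row_count X A = card {P\<in>X. fst P = A}"

definition col_count :: "(p1 \<times> p1) set \<Rightarrow> p1 \<Rightarrow> nat" where
  "col_count X B = card {P\<in>X. snd P = B}"

definition valid_labelling :: "(p1 \<times> p1) set \<Rightarrow> p1 list \<Rightarrow> p1 list \<Rightarrow> bool" where
  "valid_labelling X as bs \<longleftrightarrow>
     distinct as \<and> set as = fst ` X \<and> sorted_wrt (\<ge>) (map (row_count X) as) \<and>
     distinct bs \<and> set bs = snd ` X \<and> sorted_wrt (\<ge>) (map (col_count X) bs)"

text \<open>Generators of I_X (indices 0-based: as!k is A_(k+1)).\<close>
definition gens_X :: "(p1 \<times> p1) set \<Rightarrow> p1 list \<Rightarrow> p1 list \<Rightarrow> R set" where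
  "gens_X X as bs =
     {(\<Prod>k<length as. Hform (as!k)), (\<Prod>k<length bs. Vform (bs!k))} \<union>
     {(\<Prod>k<i. Hform (as!k)) * (\<Prod>k<row_count X (as!i). Vform (bs!k)) | i.
        1 \<le> i \<and> i < length as \<and> row_count X (as!i) < row_count X (as!(i-1))}"

text \<open>Standard generating set of I_W (for X_W empty this is {Lambda}).\<close>
definition std_gens :: "ULP \<Rightarrow> p1 list \<Rightarrow> p1 list \<Rightarrow> R set" where
  "std_gens W as bs = (\<lambda>g. Lambda W * g) ` gens_X (pts W) as bs"

end

(*
  The standard generators are the products Lambda H_A1 ... H_Ai V_B1 ... V_Bj for certain exponents
  (i, j), so a nonempty subset S is Lambda times such monomials for a nonempty set T of exponents.
  Factor out the monomial of the componentwise minimum (i0, j0) of T. What remains are monomials in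
  the later A's and B's containing a pure H-product and a pure V-product; peeling off one horizontal
  line at a time, using that (H_A, V_B) and, for A ~= C, (H_A, H_C, V_B) are prime, one shows that
  they generate the ideal of the finite grid set Y of points (A_a, B_b) at which all of them vanish.
  Y is ACM: for C, D distinct from all coordinates in Y, the forms H_C, V_D are a regular sequence
  modulo I_Y. The factored monomial becomes a product of new lines, and I_W' = Lambda' I_Y because
  line ideals are prime and avoid the points.
*)
theory Submission
  imports Defs
begin

definition is_ideal :: "'a::comm_ring_1 set \<Rightarrow> bool" where
  "is_ideal I \<longleftrightarrow> 0 \<in> I \<and> (\<forall>a\<in>I. \<forall>b\<in>I. a + b \<in> I) \<and> (\<forall>a\<in>I. \<forall>r. r * a \<in> I)"

lemma ideal_0: "is_ideal I \<Longrightarrow> 0 \<in> I"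
  by (simp add: is_ideal_def)

lemma ideal_add: "is_ideal I \<Longrightarrow> a \<in> I \<Longrightarrow> b \<in> I \<Longrightarrow> a + b \<in> I"
  by (simp add: is_ideal_def)

lemma ideal_mult_left: "is_ideal I \<Longrightarrow> a \<in> I \<Longrightarrow> r * a \<in> I"
  by (simp add: is_ideal_def)

lemma ideal_mult_right: "is_ideal I \<Longrightarrow> a \<in> I \<Longrightarrow> a * r \<in> I"
  using ideal_mult_left[of I a r] by (simp add: mult.commute)

lemma ideal_uminus: "is_ideal I \<Longrightarrow> a \<in> I \<Longrightarrow> - a \<in> I"
  using ideal_mult_left[of I a "-1"] by simp

lemma ideal_diff: "is_ideal I \<Longrightarrow> a \<in> I \<Longrightarrow> b \<in> I \<Longrightarrow> a - b \<in> I"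
  using ideal_add[of I a "- b"] ideal_uminus[of I b] by simp

lemma ideal_sum: "is_ideal I \<Longrightarrow> (\<And>x. x \<in> F \<Longrightarrow> f x \<in> I) \<Longrightarrow> sum f F \<in> I"
  by (induction F rule: infinite_finite_induct) (auto simp: ideal_0 ideal_add)

lemma ideal_prod: "is_ideal I \<Longrightarrow> finite F \<Longrightarrow> k \<in> F \<Longrightarrow> f k \<in> I \<Longrightarrow> prod f F \<in> I"
  by (simp add: prod.remove ideal_mult_right)

lemma ideal_image_mult:
  assumes "is_ideal I"
  shows "is_ideal ((*) c ` I)"
  unfolding is_ideal_def
proof (intro conjI ballI allI)
  show "0 \<in> (*) c ` I" using ideal_0[OF assms] by (intro image_eqI[of _ _ 0]) auto
next
  fix a b assume "a \<in> (*) c ` I" "b \<in> (*) c ` I"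
  then obtain a' b' where "a = c * a'" "b = c * b'" "a' \<in> I" "b' \<in> I" by blast
  then show "a + b \<in> (*) c ` I"
    using ideal_add[OF assms] by (intro image_eqI[of _ _ "a' + b'"]) (auto simp: distrib_left)
next
  fix a r assume "a \<in> (*) c ` I"
  then obtain a' where "a = c * a'" "a' \<in> I" by blast
  then show "r * a \<in> (*) c ` I"
    using ideal_mult_left[OF assms] by (intro image_eqI[of _ _ "r * a'"]) (auto simp: mult.left_commute)
qed

lemma is_ideal_mult_add_principal:
  assumes "is_ideal I"
  shows "is_ideal {a * q + r * b | q r. q \<in> I}"
  unfolding is_ideal_def
proof (intro conjI ballI allI)
  have "0 = a * 0 + 0 * b" by simp
  then show "0 \<in> {a * q + r * b | q r. q \<in> I}" using ideal_0[OF assms] by blast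
next
  fix x y assume "x \<in> {a * q + r * b | q r. q \<in> I}" "y \<in> {a * q + r * b | q r. q \<in> I}"
  then obtain q1 r1 q2 r2 where "x = a * q1 + r1 * b" "y = a * q2 + r2 * b" "q1 \<in> I" "q2 \<in> I"
    by blast
  then have "x + y = a * (q1 + q2) + (r1 + r2) * b" "q1 + q2 \<in> I"
    by (simp_all add: algebra_simps ideal_add[OF assms])
  then show "x + y \<in> {a * q + r * b | q r. q \<in> I}" by blast
next
  fix x s assume "x \<in> {a * q + r * b | q r. q \<in> I}"
  then obtain q r where "x = a * q + r * b" "q \<in> I" by blast
  then have "s * x = a * (s * q) + (s * r) * b" "s * q \<in> I"
    by (simp_all add: algebra_simps ideal_mult_right[OF assms])
  then show "s * x \<in> {a * q + r * b | q r. q \<in> I}" by blast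
qed

lemma ideal_diff_mult:
  assumes "is_ideal I" "x - y \<in> I" "u - w \<in> I"
  shows "x * u - y * w \<in> I"
proof -
  have "x * u - y * w = x * (u - w) + (x - y) * w" by (simp add: algebra_simps)
  then show ?thesis using assms by (simp add: ideal_add ideal_mult_left ideal_mult_right)
qed

lemma ideal_diff_power: "is_ideal I \<Longrightarrow> x - y \<in> I \<Longrightarrow> x ^ n - y ^ n \<in> I"
  by (induction n) (simp_all add: ideal_0 ideal_diff_mult)

lemma ideal_diff_prod:
  "is_ideal I \<Longrightarrow> (\<And>v. v \<in> A \<Longrightarrow> f v - g v \<in> I) \<Longrightarrow> prod f A - prod g A \<in> I"
  by (induction A rule: infinite_finite_induct) (simp_all add: ideal_0 ideal_diff_mult)

definition prime_ideal :: "'a::comm_ring_1 set \<Rightarrow> bool" where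
  "prime_ideal P \<longleftrightarrow> is_ideal P \<and> 1 \<notin> P \<and> (\<forall>p q. p * q \<in> P \<longrightarrow> p \<in> P \<or> q \<in> P)"

lemma prime_ideal_mult_cancel: "prime_ideal P \<Longrightarrow> a \<notin> P \<Longrightarrow> a * q \<in> P \<Longrightarrow> q \<in> P"
  unfolding prime_ideal_def by blast

lemma prime_ideal_prod_notin:
  assumes "prime_ideal P" "\<And>k. k \<in> F \<Longrightarrow> f k \<notin> P"
  shows "prod f F \<notin> P"
  using assms(2)
proof (induction F rule: infinite_finite_induct)
  case (insert x F)
  then show ?case using assms(1) unfolding prime_ideal_def by auto
qed (use assms(1) in \<open>auto simp: prime_ideal_def\<close>)

lemma ideal_gen_is_ideal: "is_ideal (ideal_gen S)"
  unfolding is_ideal_def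
proof (intro conjI ballI allI)
  show "0 \<in> ideal_gen S" unfolding ideal_gen_def
    by (rule CollectI, rule exI[of _ "{}"]) auto
next
  fix a b assume "a \<in> ideal_gen S" "b \<in> ideal_gen S"
  then obtain F1 r1 F2 r2 where f: "finite F1" "F1 \<subseteq> S" "a = (\<Sum>f\<in>F1. r1 f * f)"
    "finite F2" "F2 \<subseteq> S" "b = (\<Sum>f\<in>F2. r2 f * f)"
    unfolding ideal_gen_def by blast
  define r where "r f = (if f \<in> F1 then r1 f else 0) + (if f \<in> F2 then r2 f else 0)" for f
  have "(\<Sum>f\<in>F1 \<union> F2. r f * f) =
      (\<Sum>f\<in>F1 \<union> F2. (if f \<in> F1 then r1 f * f else 0) + (if f \<in> F2 then r2 f * f else 0))"
    unfolding r_def by (rule sum.cong) (auto simp: distrib_right)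
  also have "\<dots> = (\<Sum>f\<in>F1 \<union> F2. (if f \<in> F1 then r1 f * f else 0)) +
      (\<Sum>f\<in>F1 \<union> F2. (if f \<in> F2 then r2 f * f else 0))"
    by (rule sum.distrib)
  also have "\<dots> = a + b"
    using f by (simp add: sum.If_cases Int_absorb1)
  finally show "a + b \<in> ideal_gen S" unfolding ideal_gen_def using f
    by (intro CollectI exI[of _ "F1 \<union> F2"] exI[of _ r]) auto
next
  fix a r assume "a \<in> ideal_gen S"
  then obtain F r1 where f: "finite F" "F \<subseteq> S" "a = (\<Sum>f\<in>F. r1 f * f)"
    unfolding ideal_gen_def by blast
  have "r * a = (\<Sum>f\<in>F. (r * r1 f) * f)" using f by (simp add: sum_distrib_left mult.assoc)
  then show "r * a \<in> ideal_gen S" unfolding ideal_gen_def using f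
    by (intro CollectI exI[of _ F] exI[of _ "\<lambda>f. r * r1 f"]) simp
qed

lemmas ideal_gen_0 = ideal_0[OF ideal_gen_is_ideal]
lemmas ideal_gen_add = ideal_add[OF ideal_gen_is_ideal]
lemmas ideal_gen_diff = ideal_diff[OF ideal_gen_is_ideal]
lemmas ideal_gen_mult_left = ideal_mult_left[OF ideal_gen_is_ideal]
lemmas ideal_gen_mult_right = ideal_mult_right[OF ideal_gen_is_ideal]
lemmas ideal_gen_uminus = ideal_uminus[OF ideal_gen_is_ideal]

lemma ideal_gen_generator: "s \<in> S \<Longrightarrow> s \<in> ideal_gen S"
  unfolding ideal_gen_def by (rule CollectI, rule exI[of _ "{s}"], rule exI[of _ "\<lambda>_. 1"]) auto

lemma ideal_gen_minimal: "is_ideal J \<Longrightarrow> S \<subseteq> J \<Longrightarrow> ideal_gen S \<subseteq> J"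
  unfolding ideal_gen_def by (auto intro!: ideal_sum ideal_mult_left)

lemma ideal_gen_mono: "S \<subseteq> T \<Longrightarrow> ideal_gen S \<subseteq> ideal_gen T"
  by (meson ideal_gen_generator ideal_gen_is_ideal ideal_gen_minimal subset_iff)

lemma ideal_gen_ideal: "is_ideal J \<Longrightarrow> ideal_gen J = J"
  using ideal_gen_minimal[of J J] ideal_gen_generator[of _ J] by auto

lemma ideal_gen_eq_UNIV: "1 \<in> ideal_gen S \<Longrightarrow> ideal_gen S = UNIV"
  using ideal_gen_mult_left[of 1 S] by auto

lemma ideal_gen_prod: "finite F \<Longrightarrow> k \<in> F \<Longrightarrow> f k \<in> S \<Longrightarrow> prod f F \<in> ideal_gen S"
  by (rule ideal_prod[OF ideal_gen_is_ideal]) (auto intro: ideal_gen_generator)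

lemma ideal_gen_insert: "ideal_gen (insert x S) = {k + c * x | k c. k \<in> ideal_gen S}"
proof
  let ?J = "{k + c * x | k c. k \<in> ideal_gen S}"
  have "is_ideal ?J"
    using is_ideal_mult_add_principal[OF ideal_gen_is_ideal, of 1 x S] by simp
  moreover have "insert x S \<subseteq> ?J"
    using ideal_gen_0 ideal_gen_generator by (force intro: exI[of _ 1] exI[of _ 0])
  ultimately show "ideal_gen (insert x S) \<subseteq> ?J" by (rule ideal_gen_minimal)
next
  show "{k + c * x | k c. k \<in> ideal_gen S} \<subseteq> ideal_gen (insert x S)"
  proof clarify
    fix k c assume "k \<in> ideal_gen S"
    then have "k \<in> ideal_gen (insert x S)" using ideal_gen_mono[of S "insert x S"] by blast
    moreover have "c * x \<in> ideal_gen (insert x S)" by (simp add: ideal_gen_mult_left ideal_gen_generator)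
    ultimately show "k + c * x \<in> ideal_gen (insert x S)" by (rule ideal_gen_add)
  qed
qed

lemma ideal_gen_empty: "ideal_gen {} = {0}"
  using ideal_gen_0 by (auto simp: ideal_gen_def)

lemma ideal_gen_singleton: "ideal_gen {x} = {c * x | c. True}"
  by (simp add: ideal_gen_insert ideal_gen_empty)

lemma ideal_gen_pair: "ideal_gen {x, y} = {a * x + b * y | a b. True}"
proof (intro set_eqI iffI)
  fix w assume "w \<in> ideal_gen {x, y}"
  then obtain a b where "w = b * y + a * x"
    unfolding ideal_gen_insert[of x] ideal_gen_singleton by blast
  then have "w = a * x + b * y" by (simp add: add.commute)
  then show "w \<in> {a * x + b * y | a b. True}" by blast
next
  fix w assume "w \<in> {a * x + b * y | a b. True}"
  then obtain a b where "w = a * x + b * y" by blast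
  then have "w = b * y + a * x" by (simp add: add.commute)
  then show "w \<in> ideal_gen {x, y}"
    unfolding ideal_gen_insert[of x] ideal_gen_singleton by blast
qed

lemma ideal_gen_triple: "ideal_gen {x, y, z} = {a * x + b * y + c * z | a b c. True}"
proof (intro set_eqI iffI)
  fix w assume "w \<in> ideal_gen {x, y, z}"
  then obtain a b c where "w = a * y + b * z + c * x"
    unfolding ideal_gen_insert[of x] ideal_gen_pair by blast
  then have "w = c * x + a * y + b * z" by (simp add: algebra_simps)
  then show "w \<in> {a * x + b * y + c * z | a b c. True}" by blast
next
  fix w assume "w \<in> {a * x + b * y + c * z | a b c. True}"
  then obtain a b c where "w = a * x + b * y + c * z" by blast
  then have "w = (b * y + c * z) + a * x" by (simp add: algebra_simps)
  then show "w \<in> ideal_gen {x, y, z}"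
    unfolding ideal_gen_insert[of x] ideal_gen_pair by blast
qed

lemma ideal_gen_image_mult: "ideal_gen ((*) c ` S) = (*) c ` ideal_gen S"
proof
  show "ideal_gen ((*) c ` S) \<subseteq> (*) c ` ideal_gen S"
    by (rule ideal_gen_minimal) (auto intro: ideal_image_mult ideal_gen_is_ideal ideal_gen_generator)
next
  have "is_ideal {g. c * g \<in> ideal_gen ((*) c ` S)}"
    unfolding is_ideal_def
    by (auto simp: distrib_left ideal_gen_0 ideal_gen_add)
      (metis ideal_gen_mult_left mult.left_commute)
  then have "ideal_gen S \<subseteq> {g. c * g \<in> ideal_gen ((*) c ` S)}"
    by (rule ideal_gen_minimal) (auto intro: ideal_gen_generator)
  then show "(*) c ` ideal_gen S \<subseteq> ideal_gen ((*) c ` S)" by auto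
qed

lemma ideal_gen_insert_ideal_gen: "ideal_gen (insert x (ideal_gen S)) = ideal_gen (insert x S)"
  by (simp add: ideal_gen_insert ideal_gen_ideal ideal_gen_is_ideal)

section \<open>Substitution of variables\<close>

fun var_rank :: "var \<Rightarrow> nat" where
  "var_rank X0 = 0" | "var_rank X1 = 1" | "var_rank Y0 = 2" | "var_rank Y1 = 3"

text \<open>Any linear order on the variables will do: it only serves to make \<open>R\<close> an integral
  domain, through the \<open>idom\<close> instance of \<open>Poly_Mapping\<close>.\<close>

instantiation var :: linorder
begin
definition less_eq_var :: "var \<Rightarrow> var \<Rightarrow> bool" where
  "less_eq_var a b \<longleftrightarrow> var_rank a \<le> var_rank b"
definition less_var :: "var \<Rightarrow> var \<Rightarrow> bool" where
  "less_var a b \<longleftrightarrow> var_rank a < var_rank b"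
instance
proof
  show "a = b" if "a \<le> b" "b \<le> a" for a b :: var
    using that by (cases a; cases b) (simp_all add: less_eq_var_def)
qed (auto simp: less_eq_var_def less_var_def)
end

lemma UNIV_var: "(UNIV :: var set) = {X0, X1, Y0, Y1}"
  using var.exhaust by auto

instance var :: finite
  by standard (simp add: UNIV_var)

lemma pconst_add: "pconst (a + b) = pconst a + pconst b"
  by (simp add: pconst_def single_add)

lemma pconst_mult: "pconst (a * b) = pconst a * pconst b"
  by (simp add: pconst_def mult_single)

lemma pconst_diff: "pconst (a - b) = pconst a - pconst b"
  by (simp add: pconst_def single_diff)

lemma pconst_0 [simp]: "pconst 0 = 0"
  by (simp add: pconst_def)

lemma pconst_1 [simp]: "pconst 1 = 1"
  by (simp add: pconst_def)

lemma pconst_eq_0_iff [simp]: "pconst c = 0 \<longleftrightarrow> c = 0"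
  by (metis pconst_def lookup_single_eq lookup_zero single_zero)

lemma pvar_neq_0 [simp]: "pvar v \<noteq> 0"
  by (metis pvar_def lookup_single_eq lookup_zero one_neq_zero)

lemma poly_mapping_sum_single:
  "(p :: 'a \<Rightarrow>\<^sub>0 'b::comm_monoid_add) =
    (\<Sum>m\<in>Poly_Mapping.keys p. Poly_Mapping.single m (Poly_Mapping.lookup p m))"
  by (rule poly_mapping_eqI) (simp add: lookup_sum lookup_single when_def in_keys_iff)

definition psubst_monom :: "(var \<Rightarrow> R) \<Rightarrow> (var \<Rightarrow>\<^sub>0 nat) \<Rightarrow> R" where
  "psubst_monom \<sigma> m = (\<Prod>v\<in>UNIV. \<sigma> v ^ Poly_Mapping.lookup m v)"

definition psubst :: "(var \<Rightarrow> R) \<Rightarrow> R \<Rightarrow> R" where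
  "psubst \<sigma> p = (\<Sum>m\<in>Poly_Mapping.keys p. pconst (Poly_Mapping.lookup p m) * psubst_monom \<sigma> m)"

lemma psubst_monom_add: "psubst_monom \<sigma> (m + n) = psubst_monom \<sigma> m * psubst_monom \<sigma> n"
  by (simp add: psubst_monom_def lookup_add power_add prod.distrib)

lemma psubst_superset:
  assumes "finite M" "Poly_Mapping.keys p \<subseteq> M"
  shows "psubst \<sigma> p = (\<Sum>m\<in>M. pconst (Poly_Mapping.lookup p m) * psubst_monom \<sigma> m)"
  unfolding psubst_def
  by (rule sum.mono_neutral_left) (use assms in \<open>auto simp: in_keys_iff\<close>)

lemma psubst_0 [simp]: "psubst \<sigma> 0 = 0"
  by (simp add: psubst_def)

lemma psubst_add: "psubst \<sigma> (p + q) = psubst \<sigma> p + psubst \<sigma> q"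
proof -
  let ?M = "Poly_Mapping.keys p \<union> Poly_Mapping.keys q"
  have "psubst \<sigma> (p + q) = (\<Sum>m\<in>?M. pconst (Poly_Mapping.lookup (p + q) m) * psubst_monom \<sigma> m)"
    by (rule psubst_superset) (use keys_add[of p q] in auto)
  also have "\<dots> = psubst \<sigma> p + psubst \<sigma> q"
    by (simp add: lookup_add pconst_add distrib_right sum.distrib psubst_superset[symmetric])
  finally show ?thesis .
qed

lemma psubst_single: "psubst \<sigma> (Poly_Mapping.single m c) = pconst c * psubst_monom \<sigma> m"
  by (cases "c = 0") (simp_all add: psubst_def)

lemma psubst_sum: "psubst \<sigma> (sum f A) = (\<Sum>a\<in>A. psubst \<sigma> (f a))"
  by (induction A rule: infinite_finite_induct) (simp_all add: psubst_add)

lemma psubst_mult: "psubst \<sigma> (p * q) = psubst \<sigma> p * psubst \<sigma> q"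
proof -
  let ?c = "\<lambda>p m. Poly_Mapping.lookup p m"
  have "p * q = (\<Sum>m\<in>Poly_Mapping.keys p. \<Sum>n\<in>Poly_Mapping.keys q.
      Poly_Mapping.single (m + n) (?c p m * ?c q n))"
    by (subst poly_mapping_sum_single[of p], subst poly_mapping_sum_single[of q])
      (simp add: sum_distrib_left sum_distrib_right mult_single, rule sum.swap)
  then have "psubst \<sigma> (p * q) = (\<Sum>m\<in>Poly_Mapping.keys p. \<Sum>n\<in>Poly_Mapping.keys q.
      (pconst (?c p m) * psubst_monom \<sigma> m) * (pconst (?c q n) * psubst_monom \<sigma> n))"
    by (simp add: psubst_sum psubst_single psubst_monom_add pconst_mult mult_ac)
  also have "\<dots> = psubst \<sigma> p * psubst \<sigma> q"
    by (simp add: psubst_def sum_distrib_left sum_distrib_right) (rule sum.swap)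
  finally show ?thesis .
qed

lemma psubst_uminus: "psubst \<sigma> (- p) = - psubst \<sigma> p"
  using psubst_add[of \<sigma> p "- p"] by (simp add: eq_neg_iff_add_eq_0 add.commute)

lemma psubst_diff: "psubst \<sigma> (p - q) = psubst \<sigma> p - psubst \<sigma> q"
  using psubst_add[of \<sigma> p "- q"] by (simp add: psubst_uminus)

lemma psubst_pconst [simp]: "psubst \<sigma> (pconst c) = pconst c"
  unfolding pconst_def psubst_single by (simp add: psubst_monom_def pconst_def)

lemma psubst_1 [simp]: "psubst \<sigma> 1 = 1"
  using psubst_pconst[of \<sigma> 1] by simp

lemma psubst_pvar [simp]: "psubst \<sigma> (pvar v) = \<sigma> v"
proof -
  have "psubst_monom \<sigma> (Poly_Mapping.single v 1) = \<sigma> v"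
    unfolding psubst_monom_def lookup_single by (subst prod.remove[of _ v]) (auto simp: when_def)
  then show ?thesis unfolding pvar_def psubst_single by simp
qed

lemma psubst_prod: "psubst \<sigma> (prod f A) = (\<Prod>a\<in>A. psubst \<sigma> (f a))"
  by (induction A rule: infinite_finite_induct) (simp_all add: psubst_mult)

lemmas psubst_simps = psubst_add psubst_mult psubst_diff psubst_uminus psubst_prod

lemma psubst_monom_pvar: "psubst_monom pvar m = Poly_Mapping.single m 1"
proof -
  have pow: "(Poly_Mapping.single (Poly_Mapping.single v 1) (1::complex)) ^ n =
      Poly_Mapping.single (Poly_Mapping.single v n) 1" for v n
    by (induction n) (simp_all add: mult_single single_add[symmetric] add.commute)
  have "psubst_monom pvar m =
      (\<Prod>v\<in>UNIV. Poly_Mapping.single (Poly_Mapping.single v (Poly_Mapping.lookup m v)) 1)"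
    unfolding psubst_monom_def pvar_def pow ..
  also have "\<dots> = Poly_Mapping.single (\<Sum>v\<in>UNIV. Poly_Mapping.single v (Poly_Mapping.lookup m v)) 1"
    by (induction rule: finite_induct[OF finite_UNIV]) (simp_all add: mult_single)
  also have "(\<Sum>v\<in>UNIV. Poly_Mapping.single v (Poly_Mapping.lookup m v)) = m"
    by (rule poly_mapping_eqI) (simp add: lookup_sum lookup_single when_def)
  finally show ?thesis .
qed

lemma psubst_pvar_id: "psubst pvar p = p"
  unfolding psubst_def psubst_monom_pvar pconst_def
  by (simp add: mult_single poly_mapping_sum_single[symmetric])

text \<open>If every variable is congruent to its image modulo \<open>(G)\<close> and \<open>\<sigma>\<close> kills \<open>G\<close>, then
  \<open>(G)\<close> is the kernel of \<open>\<sigma>\<close>; since \<open>R\<close> is a domain, such an ideal is prime.\<close>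

lemma diff_psubst_in_ideal_gen:
  assumes "\<And>v. pvar v - \<sigma> v \<in> ideal_gen G"
  shows "p - psubst \<sigma> p \<in> ideal_gen G"
proof -
  have "p - psubst \<sigma> p =
      (\<Sum>m\<in>Poly_Mapping.keys p. pconst (Poly_Mapping.lookup p m) * (psubst_monom pvar m - psubst_monom \<sigma> m))"
    by (subst (1) psubst_pvar_id[symmetric]) (simp add: psubst_def sum_subtractf right_diff_distrib)
  also have "\<dots> \<in> ideal_gen G"
    unfolding psubst_monom_def
    by (intro ideal_sum[OF ideal_gen_is_ideal] ideal_gen_mult_left
        ideal_diff_prod[OF ideal_gen_is_ideal] ideal_diff_power[OF ideal_gen_is_ideal] assms)
  finally show ?thesis .
qed

lemma ideal_gen_eq_kernel:
  assumes "\<And>v. pvar v - \<sigma> v \<in> ideal_gen G" "\<And>g. g \<in> G \<Longrightarrow> psubst \<sigma> g = 0"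
  shows "p \<in> ideal_gen G \<longleftrightarrow> psubst \<sigma> p = 0"
proof
  have "is_ideal {p. psubst \<sigma> p = 0}"
    unfolding is_ideal_def by (simp add: psubst_add psubst_mult)
  then have "ideal_gen G \<subseteq> {p. psubst \<sigma> p = 0}"
    by (rule ideal_gen_minimal) (use assms(2) in auto)
  then show "p \<in> ideal_gen G \<Longrightarrow> psubst \<sigma> p = 0" by blast
next
  show "psubst \<sigma> p = 0 \<Longrightarrow> p \<in> ideal_gen G"
    using diff_psubst_in_ideal_gen[OF assms(1), of p] by simp
qed

lemma prime_ideal_kernel:
  assumes "\<And>v. pvar v - \<sigma> v \<in> ideal_gen G" "\<And>g. g \<in> G \<Longrightarrow> psubst \<sigma> g = 0"
  shows "prime_ideal (ideal_gen G)"
  using ideal_gen_eq_kernel[OF assms] by (simp add: prime_ideal_def ideal_gen_is_ideal psubst_mult)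

section \<open>Prime ideals of lines and points\<close>

lemma Hform_None: "Hform None = pvar X0"
  by (simp add: Hform_def coords_def)

lemma Hform_Some: "Hform (Some t) = pconst t * pvar X0 - pvar X1"
  by (simp add: Hform_def coords_def)

lemma Vform_None: "Vform None = pvar Y0"
  by (simp add: Vform_def coords_def)

lemma Vform_Some: "Vform (Some t) = pconst t * pvar Y0 - pvar Y1"
  by (simp add: Vform_def coords_def)

text \<open>Substitutions with kernels \<open>(H\<^sub>A)\<close> and \<open>(V\<^sub>B)\<close>, obtained by solving \<open>H\<^sub>A = 0\<close> for one of
  \<open>x\<^sub>0, x\<^sub>1\<close> (resp. \<open>V\<^sub>B = 0\<close> for one of \<open>y\<^sub>0, y\<^sub>1\<close>), and their combinations with kernels
  \<open>(H\<^sub>A, V\<^sub>B)\<close> and \<open>(x\<^sub>0, x\<^sub>1, V\<^sub>B)\<close>.\<close>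

definition kill_H :: "p1 \<Rightarrow> var \<Rightarrow> R" where
  "kill_H A v = (case A of None \<Rightarrow> (if v = X0 then 0 else pvar v)
                         | Some t \<Rightarrow> (if v = X1 then pconst t * pvar X0 else pvar v))"

definition kill_V :: "p1 \<Rightarrow> var \<Rightarrow> R" where
  "kill_V B v = (case B of None \<Rightarrow> (if v = Y0 then 0 else pvar v)
                         | Some t \<Rightarrow> (if v = Y1 then pconst t * pvar Y0 else pvar v))"

definition kill_HV :: "p1 \<Rightarrow> p1 \<Rightarrow> var \<Rightarrow> R" where
  "kill_HV A B v = (if v = X0 \<or> v = X1 then kill_H A v else kill_V B v)"

definition kill_xV :: "p1 \<Rightarrow> var \<Rightarrow> R" where
  "kill_xV B v = (if v = X0 \<or> v = X1 then 0 else kill_V B v)"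

lemma pvar_diff_kill_H: "Hform A \<in> ideal_gen G \<Longrightarrow> pvar v - kill_H A v \<in> ideal_gen G"
proof -
  have "pvar v - kill_H A v \<in> {0, Hform A, - Hform A}"
    by (cases A) (auto simp: kill_H_def Hform_None Hform_Some)
  then show "Hform A \<in> ideal_gen G \<Longrightarrow> pvar v - kill_H A v \<in> ideal_gen G"
    by (auto simp: ideal_gen_0 ideal_gen_uminus)
qed

lemma pvar_diff_kill_V: "Vform B \<in> ideal_gen G \<Longrightarrow> pvar v - kill_V B v \<in> ideal_gen G"
proof -
  have "pvar v - kill_V B v \<in> {0, Vform B, - Vform B}"
    by (cases B) (auto simp: kill_V_def Vform_None Vform_Some)
  then show "Vform B \<in> ideal_gen G \<Longrightarrow> pvar v - kill_V B v \<in> ideal_gen G"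
    by (auto simp: ideal_gen_0 ideal_gen_uminus)
qed

lemma psubst_Hform_kill_H:
  assumes "\<sigma> X0 = kill_H A X0" "\<sigma> X1 = kill_H A X1"
  shows "psubst \<sigma> (Hform A') = 0 \<longleftrightarrow> A' = A"
proof (cases A; cases A')
  fix t t' assume "A = Some t" "A' = Some t'"
  then have "psubst \<sigma> (Hform A') = pconst (t' - t) * pvar X0"
    using assms by (simp add: kill_H_def Hform_Some psubst_simps pconst_diff algebra_simps)
  then show ?thesis using \<open>A = Some t\<close> \<open>A' = Some t'\<close> by simp
qed (use assms in \<open>auto simp: kill_H_def Hform_None Hform_Some psubst_simps\<close>)

lemma psubst_Vform_kill_V:
  assumes "\<sigma> Y0 = kill_V B Y0" "\<sigma> Y1 = kill_V B Y1"
  shows "psubst \<sigma> (Vform B') = 0 \<longleftrightarrow> B' = B"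
proof (cases B; cases B')
  fix t t' assume "B = Some t" "B' = Some t'"
  then have "psubst \<sigma> (Vform B') = pconst (t' - t) * pvar Y0"
    using assms by (simp add: kill_V_def Vform_Some psubst_simps pconst_diff algebra_simps)
  then show ?thesis using \<open>B = Some t\<close> \<open>B' = Some t'\<close> by simp
qed (use assms in \<open>auto simp: kill_V_def Vform_None Vform_Some psubst_simps\<close>)

lemma psubst_Hform_fixed: "\<sigma> X0 = pvar X0 \<Longrightarrow> \<sigma> X1 = pvar X1 \<Longrightarrow> psubst \<sigma> (Hform A) = Hform A"
  by (cases A) (simp_all add: Hform_None Hform_Some psubst_simps)

lemma psubst_Vform_fixed: "\<sigma> Y0 = pvar Y0 \<Longrightarrow> \<sigma> Y1 = pvar Y1 \<Longrightarrow> psubst \<sigma> (Vform B) = Vform B"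
  by (cases B) (simp_all add: Vform_None Vform_Some psubst_simps)

lemma mem_H_iff: "p \<in> ideal_gen {Hform A} \<longleftrightarrow> psubst (kill_H A) p = 0"
  by (rule ideal_gen_eq_kernel)
    (auto intro: pvar_diff_kill_H ideal_gen_generator simp: psubst_Hform_kill_H)

lemma mem_V_iff: "p \<in> ideal_gen {Vform B} \<longleftrightarrow> psubst (kill_V B) p = 0"
  by (rule ideal_gen_eq_kernel)
    (auto intro: pvar_diff_kill_V ideal_gen_generator simp: psubst_Vform_kill_V)

lemma mem_I_pt_iff: "p \<in> I_pt (A, B) \<longleftrightarrow> psubst (kill_HV A B) p = 0"
  unfolding I_pt_def fst_conv snd_conv
proof (rule ideal_gen_eq_kernel)
  have "Hform A \<in> ideal_gen {Hform A, Vform B}" "Vform B \<in> ideal_gen {Hform A, Vform B}"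
    by (simp_all add: ideal_gen_generator)
  then show "pvar v - kill_HV A B v \<in> ideal_gen {Hform A, Vform B}" for v
    unfolding kill_HV_def using pvar_diff_kill_H pvar_diff_kill_V by simp
  show "psubst (kill_HV A B) g = 0" if "g \<in> {Hform A, Vform B}" for g
    using that psubst_Hform_kill_H[of "kill_HV A B" A A] psubst_Vform_kill_V[of "kill_HV A B" B B]
    by (auto simp: kill_HV_def kill_V_def split: option.splits)
qed

lemma pvar_X_in_ideal_gen_HH:
  assumes "A \<noteq> C" "v = X0 \<or> v = X1"
  shows "pvar v \<in> ideal_gen {Hform A, Hform C}"
proof -
  obtain a0 a1 c0 c1 where a: "coords A = (a0, a1)" and c: "coords C = (c0, c1)"
    by (cases "coords A", cases "coords C")
  define d where "d = a1 * c0 - a0 * c1"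
  have "d \<noteq> 0"
    using assms(1) a c by (cases A; cases C) (auto simp: d_def coords_def)
  have HA: "Hform A = pconst a1 * pvar X0 - pconst a0 * pvar X1"
    and HC: "Hform C = pconst c1 * pvar X0 - pconst c0 * pvar X1"
    using a c by (simp_all add: Hform_def)
  \<comment> \<open>Cramer's rule for the two independent linear forms\<close>
  have "pconst c0 * Hform A - pconst a0 * Hform C = pconst d * pvar X0"
    "pconst c1 * Hform A - pconst a1 * Hform C = pconst d * pvar X1"
    unfolding HA HC d_def by (simp_all add: pconst_diff pconst_mult algebra_simps)
  moreover have "Hform A \<in> ideal_gen {Hform A, Hform C}" "Hform C \<in> ideal_gen {Hform A, Hform C}"
    by (simp_all add: ideal_gen_generator)
  ultimately have "pconst d * pvar X0 \<in> ideal_gen {Hform A, Hform C}"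
    "pconst d * pvar X1 \<in> ideal_gen {Hform A, Hform C}"
    by (metis ideal_gen_diff ideal_gen_mult_left)+
  then have "pconst d * pvar v \<in> ideal_gen {Hform A, Hform C}"
    using assms(2) by auto
  then have "pconst (1 / d) * (pconst d * pvar v) \<in> ideal_gen {Hform A, Hform C}"
    by (rule ideal_gen_mult_left)
  then show ?thesis
    using \<open>d \<noteq> 0\<close> by (simp flip: mult.assoc pconst_mult)
qed

lemma mem_HHV_iff:
  assumes "A \<noteq> C"
  shows "p \<in> ideal_gen {Hform A, Hform C, Vform B} \<longleftrightarrow> psubst (kill_xV B) p = 0"
proof (rule ideal_gen_eq_kernel)
  have "pvar X0 \<in> ideal_gen {Hform A, Hform C, Vform B}" "pvar X1 \<in> ideal_gen {Hform A, Hform C, Vform B}"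
    using pvar_X_in_ideal_gen_HH[OF assms] ideal_gen_mono[of "{Hform A, Hform C}" "{Hform A, Hform C, Vform B}"]
    by auto
  moreover have "Vform B \<in> ideal_gen {Hform A, Hform C, Vform B}"
    by (simp add: ideal_gen_generator)
  ultimately show "pvar v - kill_xV B v \<in> ideal_gen {Hform A, Hform C, Vform B}" for v
    unfolding kill_xV_def using pvar_diff_kill_V by simp
  show "psubst (kill_xV B) g = 0" if "g \<in> {Hform A, Hform C, Vform B}" for g
    using that psubst_Vform_kill_V[of "kill_xV B" B B]
    by (auto simp: kill_xV_def kill_V_def Hform_def psubst_simps split: option.splits)
qed

lemma prime_ideal_H: "prime_ideal (ideal_gen {Hform A})"
  by (rule prime_ideal_kernel) (auto intro: pvar_diff_kill_H ideal_gen_generator simp: psubst_Hform_kill_H)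

lemma prime_ideal_V: "prime_ideal (ideal_gen {Vform B})"
  by (rule prime_ideal_kernel) (auto intro: pvar_diff_kill_V ideal_gen_generator simp: psubst_Vform_kill_V)

lemma prime_ideal_I_pt: "prime_ideal (I_pt P)"
  unfolding prime_ideal_def I_pt_def[symmetric]
  using mem_I_pt_iff[of _ "fst P" "snd P"]
  by (simp add: I_pt_def ideal_gen_is_ideal psubst_mult)

lemma prime_ideal_HHV: "A \<noteq> C \<Longrightarrow> prime_ideal (ideal_gen {Hform A, Hform C, Vform B})"
  unfolding prime_ideal_def using mem_HHV_iff[of A C _ B]
  by (simp add: ideal_gen_is_ideal psubst_mult)

lemma Hform_in_I_pt_iff: "Hform A \<in> I_pt P \<longleftrightarrow> A = fst P"
  using mem_I_pt_iff[of "Hform A" "fst P" "snd P"] psubst_Hform_kill_H[of "kill_HV (fst P) (snd P)" "fst P" A]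
  by (simp add: kill_HV_def)

lemma Vform_in_I_pt_iff: "Vform B \<in> I_pt P \<longleftrightarrow> B = snd P"
  using mem_I_pt_iff[of "Vform B" "fst P" "snd P"] psubst_Vform_kill_V[of "kill_HV (fst P) (snd P)" "snd P" B]
  by (simp add: kill_HV_def kill_V_def split: option.splits)

lemma Hform_in_H_iff: "Hform A' \<in> ideal_gen {Hform A} \<longleftrightarrow> A' = A"
  using mem_H_iff psubst_Hform_kill_H by auto

lemma Vform_in_V_iff: "Vform B' \<in> ideal_gen {Vform B} \<longleftrightarrow> B' = B"
  using mem_V_iff psubst_Vform_kill_V by auto

lemma Hform_neq_0: "Hform A \<noteq> 0"
  using Hform_in_H_iff[of A "if A = None then Some 0 else None"] ideal_gen_0
  by (cases A) auto

lemma Vform_neq_0: "Vform B \<noteq> 0"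
  using Vform_in_V_iff[of B "if B = None then Some 0 else None"] ideal_gen_0
  by (cases B) auto

lemma Vform_notin_H: "Vform B \<notin> ideal_gen {Hform A}"
  using mem_H_iff[of "Vform B" A] psubst_Vform_fixed[of "kill_H A" B] Vform_neq_0
  by (auto simp: kill_H_def split: option.splits)

lemma Hform_notin_V: "Hform A \<notin> ideal_gen {Vform B}"
  using mem_V_iff[of "Hform A" B] psubst_Hform_fixed[of "kill_V B" A] Hform_neq_0
  by (auto simp: kill_V_def split: option.splits)

lemma Vform_in_HHV_iff: "A \<noteq> C \<Longrightarrow> Vform B' \<in> ideal_gen {Hform A, Hform C, Vform B} \<longleftrightarrow> B' = B"
  using mem_HHV_iff[of A C "Vform B'" B] psubst_Vform_kill_V[of "kill_xV B" B B']
  by (simp add: kill_xV_def kill_V_def split: option.splits)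

lemma Hform_in_irrel: "Hform A \<in> irrel"
  unfolding irrel_def Hform_def by (intro ideal_gen_diff ideal_gen_mult_left ideal_gen_generator) simp_all

lemma Vform_in_irrel: "Vform B \<in> irrel"
  unfolding irrel_def Vform_def by (intro ideal_gen_diff ideal_gen_mult_left ideal_gen_generator) simp_all

lemma is_ideal_irrel: "is_ideal irrel"
  by (simp add: irrel_def ideal_gen_is_ideal)

lemma one_notin_irrel: "1 \<notin> irrel"
proof -
  have "1 \<in> irrel \<longleftrightarrow> psubst (\<lambda>_. 0) 1 = 0"
    unfolding irrel_def
  proof (rule ideal_gen_eq_kernel)
    show "pvar v - 0 \<in> ideal_gen {pvar X0, pvar X1, pvar Y0, pvar Y1}" for v
      by (cases v) (simp_all add: ideal_gen_generator)
  qed auto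
  then show ?thesis by simp
qed

lemma I_pt_subset_irrel: "I_pt P \<subseteq> irrel"
  unfolding I_pt_def using Hform_in_irrel Vform_in_irrel by (intro ideal_gen_minimal is_ideal_irrel) auto

lemma ideal_gen_insert_prod:
  fixes n :: nat
  assumes "\<And>k. k < n \<Longrightarrow> prime_ideal (ideal_gen (insert (f k) K))"
    and "\<And>k k'. k < n \<Longrightarrow> k' < n \<Longrightarrow> k' \<noteq> k \<Longrightarrow> f k' \<notin> ideal_gen (insert (f k) K)"
    and "\<And>k. k < n \<Longrightarrow> p \<in> ideal_gen (insert (f k) K)"
  shows "p \<in> ideal_gen (insert (\<Prod>k<n. f k) K)"
  using assms
proof (induction n)
  case 0
  have "p = 0 + p * (\<Prod>k<0. f k)" by simp
  then show ?case unfolding ideal_gen_insert using ideal_gen_0 by blast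
next
  case (Suc n)
  have "p \<in> ideal_gen (insert (\<Prod>k<n. f k) K)"
    by (rule Suc.IH) (use Suc.prems in simp_all)
  then obtain \<kappa> c where p: "p = \<kappa> + c * (\<Prod>k<n. f k)" and "\<kappa> \<in> ideal_gen K"
    unfolding ideal_gen_insert by blast
  let ?I = "ideal_gen (insert (f n) K)"
  have "\<kappa> \<in> ?I" using \<open>\<kappa> \<in> ideal_gen K\<close> ideal_gen_mono[of K "insert (f n) K"] by blast
  then have "p - \<kappa> \<in> ?I"
    using Suc.prems(3)[of n] by (simp add: ideal_gen_diff)
  then have "(\<Prod>k<n. f k) * c \<in> ?I"
    by (simp add: p mult.commute)
  moreover have "(\<Prod>k<n. f k) \<notin> ?I"
    using Suc.prems(2)[of n] by (intro prime_ideal_prod_notin[OF Suc.prems(1)[of n]]) auto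
  ultimately have "c \<in> ?I"
    using Suc.prems(1)[of n] by (blast intro: prime_ideal_mult_cancel)
  then obtain \<kappa>' d where c: "c = \<kappa>' + d * f n" and "\<kappa>' \<in> ideal_gen K"
    unfolding ideal_gen_insert by blast
  have "p = (\<kappa> + (\<Prod>k<n. f k) * \<kappa>') + d * (\<Prod>k<Suc n. f k)"
    unfolding p c by (simp add: algebra_simps)
  moreover have "\<kappa> + (\<Prod>k<n. f k) * \<kappa>' \<in> ideal_gen K"
    using \<open>\<kappa> \<in> ideal_gen K\<close> \<open>\<kappa>' \<in> ideal_gen K\<close> by (simp add: ideal_gen_add ideal_gen_mult_left)
  ultimately show ?case unfolding ideal_gen_insert by blast
qed

lemma Int_principal_primes_eq_prod_mult:
  assumes "finite F"
    and prime: "\<And>x. x \<in> F \<Longrightarrow> prime_ideal (ideal_gen {\<phi> x})"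
    and indep: "\<And>x y. x \<in> F \<Longrightarrow> y \<in> F \<Longrightarrow> x \<noteq> y \<Longrightarrow> \<phi> y \<notin> ideal_gen {\<phi> x}"
    and saturated: "\<And>x q. x \<in> F \<Longrightarrow> \<phi> x * q \<in> K \<Longrightarrow> q \<in> K"
    and "is_ideal K"
  shows "{p \<in> K. \<forall>x\<in>F. p \<in> ideal_gen {\<phi> x}} = (*) (prod \<phi> F) ` K"
proof
  have "\<exists>q\<in>K. p = prod \<phi> G * q"
    if "G \<subseteq> F" "p \<in> K" "\<forall>x\<in>G. p \<in> ideal_gen {\<phi> x}" for G p
    using finite_subset[OF \<open>G \<subseteq> F\<close> \<open>finite F\<close>] that
  proof (induction G arbitrary: p rule: finite_induct)
    case (insert x G)
    have "\<exists>q\<in>K. p = prod \<phi> G * q"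
      using insert.prems by (intro insert.IH) auto
    then obtain q where q: "q \<in> K" "p = prod \<phi> G * q" by blast
    have "x \<in> F" using insert.prems by auto
    have "\<phi> k \<notin> ideal_gen {\<phi> x}" if "k \<in> G" for k
      using that insert.hyps(2) insert.prems(1) indep[OF \<open>x \<in> F\<close>, of k] by auto
    then have "prod \<phi> G \<notin> ideal_gen {\<phi> x}"
      by (rule prime_ideal_prod_notin[OF prime[OF \<open>x \<in> F\<close>]])
    moreover have "prod \<phi> G * q \<in> ideal_gen {\<phi> x}" using insert.prems q by auto
    ultimately have "q \<in> ideal_gen {\<phi> x}"
      using prime[OF \<open>x \<in> F\<close>] by (blast intro: prime_ideal_mult_cancel)
    then obtain c where c: "q = c * \<phi> x" unfolding ideal_gen_singleton by blast
    have "c \<in> K" using saturated[OF \<open>x \<in> F\<close>, of c] q c by (simp add: mult.commute)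
    moreover have "p = prod \<phi> (insert x G) * c" using q c insert.hyps by (simp add: mult_ac)
    ultimately show ?case by blast
  qed simp
  then show "{p \<in> K. \<forall>x\<in>F. p \<in> ideal_gen {\<phi> x}} \<subseteq> (*) (prod \<phi> F) ` K" by blast
next
  show "(*) (prod \<phi> F) ` K \<subseteq> {p \<in> K. \<forall>x\<in>F. p \<in> ideal_gen {\<phi> x}}"
    using \<open>is_ideal K\<close> \<open>finite F\<close>
    by (auto intro!: ideal_mult_left ideal_gen_mult_right ideal_gen_prod)
qed

lemma is_ideal_I_X: "is_ideal (I_X X)"
  unfolding is_ideal_def I_X_def by (auto simp: ideal_gen_0 ideal_gen_add ideal_gen_mult_left I_pt_def)

lemma is_ideal_I_pt: "is_ideal (I_pt P)"
  by (simp add: I_pt_def ideal_gen_is_ideal)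

lemma I_X_antimono: "X \<subseteq> Y \<Longrightarrow> I_X Y \<subseteq> I_X X"
  unfolding I_X_def by blast

lemma I_X_mult_cancel: "(\<And>P. P \<in> X \<Longrightarrow> a \<notin> I_pt P) \<Longrightarrow> a * q \<in> I_X X \<Longrightarrow> q \<in> I_X X"
  unfolding I_X_def using prime_ideal_mult_cancel[OF prime_ideal_I_pt] by blast

lemma I_X_subset_I_pt: "P \<in> X \<Longrightarrow> I_X X \<subseteq> I_pt P"
  unfolding I_X_def by blast

lemma I_W_eq_Lambda_mult:
  assumes "is_ULP W"
  shows "I_W W = (*) (Lambda W) ` I_X (pts W)"
proof -
  let ?F = "Inl ` hlines W \<union> Inr ` vlines W"
  let ?\<phi> = "case_sum Hform Vform"
  have fin: "finite (hlines W)" "finite (vlines W)"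
    and off: "\<And>P. P \<in> pts W \<Longrightarrow> fst P \<notin> hlines W \<and> snd P \<notin> vlines W"
    using assms by (auto simp: is_ULP_def)
  have "{p \<in> I_X (pts W). \<forall>x\<in>?F. p \<in> ideal_gen {?\<phi> x}} = (*) (prod ?\<phi> ?F) ` I_X (pts W)"
  proof (rule Int_principal_primes_eq_prod_mult)
    show "finite ?F" using fin by simp
    show "prime_ideal (ideal_gen {?\<phi> x})" for x
      by (cases x) (simp_all add: prime_ideal_H prime_ideal_V)
    show "?\<phi> y \<notin> ideal_gen {?\<phi> x}" if "x \<noteq> y" for x y
      using that by (cases x; cases y)
        (simp_all add: Hform_in_H_iff Vform_in_V_iff Vform_notin_H Hform_notin_V)
    show "q \<in> I_X (pts W)" if x: "x \<in> ?F" and xq: "?\<phi> x * q \<in> I_X (pts W)" for x q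
    proof (rule I_X_mult_cancel[OF _ xq])
      show "?\<phi> x \<notin> I_pt P" if "P \<in> pts W" for P
        using x off[OF that] by (auto simp: Hform_in_I_pt_iff Vform_in_I_pt_iff)
    qed
    show "is_ideal (I_X (pts W))" by (rule is_ideal_I_X)
  qed
  moreover have "prod ?\<phi> ?F = prod ?\<phi> (Inl ` hlines W) * prod ?\<phi> (Inr ` vlines W)"
    by (rule prod.union_disjoint) (use fin in auto)
  then have "prod ?\<phi> ?F = Lambda W"
    by (simp add: Lambda_def prod.reindex)
  moreover have "I_W W = {p \<in> I_X (pts W). \<forall>x\<in>?F. p \<in> ideal_gen {?\<phi> x}}"
    unfolding I_W_def by (auto simp: ball_Un)
  ultimately show ?thesis by simp
qed

section \<open>Staircase ideals\<close>

lemma ideal_gen_prod_lessThan: "(k::nat) < n \<Longrightarrow> f k \<in> S \<Longrightarrow> (\<Prod>k<n. f k) \<in> ideal_gen S"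
  by (rule ideal_gen_prod) simp_all

lemma mem_ideal_gen_H_Vprod:
  assumes "distinct bs" "n \<le> length bs" "\<And>k. k < n \<Longrightarrow> p \<in> I_pt (A, bs!k)"
  shows "p \<in> ideal_gen {Hform A, \<Prod>k<n. Vform (bs!k)}"
proof -
  have row: "insert x {Hform A} = {Hform A, x}" for x by auto
  have "p \<in> ideal_gen (insert (\<Prod>k<n. Vform (bs!k)) {Hform A})"
  proof (rule ideal_gen_insert_prod)
    show "prime_ideal (ideal_gen (insert (Vform (bs!k)) {Hform A}))" for k
      using prime_ideal_I_pt[of "(A, bs!k)"] by (simp only: I_pt_def row fst_conv snd_conv)
  next
    fix k k' assume "k < n" "k' < n" "k' \<noteq> k"
    then have "bs!k' \<noteq> bs!k" using assms(1,2) by (simp add: nth_eq_iff_index_eq)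
    then show "Vform (bs!k') \<notin> ideal_gen (insert (Vform (bs!k)) {Hform A})"
      using Vform_in_I_pt_iff[of "bs!k'" "(A, bs!k)"] by (simp add: I_pt_def row)
  next
    show "p \<in> ideal_gen (insert (Vform (bs!k)) {Hform A})" if "k < n" for k
      using assms(3)[OF that] by (simp only: I_pt_def row fst_conv snd_conv)
  qed
  then show ?thesis by (simp only: row)
qed

lemma Hform_mult_cancel_H_Vprod:
  assumes "distinct bs" "n \<le> length bs" "A \<noteq> C"
    and "Hform A * q \<in> ideal_gen {Hform C, \<Prod>k<n. Vform (bs!k)}"
  shows "q \<in> ideal_gen {Hform C, \<Prod>k<n. Vform (bs!k)}"
proof (rule mem_ideal_gen_H_Vprod[OF assms(1,2)])
  fix k assume "k < n"
  have "(\<Prod>k<n. Vform (bs!k)) \<in> I_pt (C, bs!k)"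
    unfolding I_pt_def by (rule ideal_gen_prod_lessThan[OF \<open>k < n\<close>]) simp
  then have "{Hform C, \<Prod>k<n. Vform (bs!k)} \<subseteq> I_pt (C, bs!k)"
    by (simp add: Hform_in_I_pt_iff)
  then have "Hform A * q \<in> I_pt (C, bs!k)"
    using ideal_gen_minimal[OF is_ideal_I_pt] assms(4) by blast
  with assms(3) have "Hform A \<notin> I_pt (C, bs!k)" "Hform A * q \<in> I_pt (C, bs!k)"
    by (simp_all add: Hform_in_I_pt_iff)
  then show "q \<in> I_pt (C, bs!k)"
    by (rule prime_ideal_mult_cancel[OF prime_ideal_I_pt])
qed

lemma Vform_mult_cancel_HH_Vprod:
  assumes "distinct bs" "n \<le> length bs" "A \<noteq> C" "D \<notin> set bs"
    and "Vform D * q \<in> ideal_gen {Hform A, Hform C, \<Prod>k<n. Vform (bs!k)}"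
  shows "q \<in> ideal_gen {Hform A, Hform C, \<Prod>k<n. Vform (bs!k)}"
proof -
  have HHV: "{Hform A, Hform C, x} = insert x {Hform A, Hform C}" for x by auto
  have "q \<in> ideal_gen (insert (\<Prod>k<n. Vform (bs!k)) {Hform A, Hform C})"
  proof (rule ideal_gen_insert_prod)
    fix k assume "k < n"
    then show "prime_ideal (ideal_gen (insert (Vform (bs!k)) {Hform A, Hform C}))"
      using prime_ideal_HHV[OF assms(3)] by (simp only: HHV)
  next
    fix k k' assume "k < n" "k' < n" "k' \<noteq> k"
    then have "bs!k' \<noteq> bs!k" using assms(1,2) by (simp add: nth_eq_iff_index_eq)
    then show "Vform (bs!k') \<notin> ideal_gen (insert (Vform (bs!k)) {Hform A, Hform C})"
      using Vform_in_HHV_iff[OF assms(3)] by (simp add: HHV)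
  next
    fix k assume "k < n"
    let ?Z = "ideal_gen {Hform A, Hform C, Vform (bs!k)}"
    have "(\<Prod>k<n. Vform (bs!k)) \<in> ?Z"
      by (rule ideal_gen_prod_lessThan[OF \<open>k < n\<close>]) simp
    then have "{Hform A, Hform C, \<Prod>k<n. Vform (bs!k)} \<subseteq> ?Z"
      by (simp add: ideal_gen_generator)
    then have "ideal_gen {Hform A, Hform C, \<Prod>k<n. Vform (bs!k)} \<subseteq> ?Z"
      by (rule ideal_gen_minimal[OF ideal_gen_is_ideal])
    then have "Vform D * q \<in> ?Z" using assms(5) by blast
    moreover have "D \<noteq> bs!k" using \<open>k < n\<close> assms(2,4) by auto
    ultimately have "Vform D \<notin> ?Z" "Vform D * q \<in> ?Z"
      using Vform_in_HHV_iff[OF assms(3), of D "bs!k"] by simp_all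
    then have "q \<in> ?Z"
      by (rule prime_ideal_mult_cancel[OF prime_ideal_HHV[OF assms(3)]])
    then show "q \<in> ideal_gen (insert (Vform (bs!k)) {Hform A, Hform C})"
      by (simp only: HHV)
  qed
  then show ?thesis by (simp add: HHV)
qed

definition HV_prod :: "p1 list \<Rightarrow> p1 list \<Rightarrow> nat \<times> nat \<Rightarrow> R" where
  "HV_prod as bs t = (\<Prod>k<fst t. Hform (as!k)) * (\<Prod>k<snd t. Vform (bs!k))"

text \<open>The grid points \<open>(A\<^sub>a, B\<^sub>b)\<close> at which every \<open>HV_prod\<close> with exponent in \<open>T\<close> vanishes
  (see \<open>HV_prod_in_I_pt\<close>).\<close>

definition grid_zeros :: "p1 list \<Rightarrow> p1 list \<Rightarrow> (nat \<times> nat) set \<Rightarrow> (p1 \<times> p1) set" where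
  "grid_zeros as bs T =
     {(as!a, bs!b) | a b. a < length as \<and> b < length bs \<and> (\<forall>t\<in>T. a < fst t \<or> b < snd t)}"

definition is_staircase :: "p1 list \<Rightarrow> p1 list \<Rightarrow> (nat \<times> nat) set \<Rightarrow> bool" where
  "is_staircase as bs T \<longleftrightarrow>
     (\<forall>t\<in>T. fst t \<le> length as \<and> snd t \<le> length bs) \<and> (\<exists>i. (i, 0) \<in> T) \<and> (\<exists>j. (0, j) \<in> T)"

lemma HV_prod_0_0 [simp]: "HV_prod as bs (0, 0) = 1"
  by (simp add: HV_prod_def)

lemma ideal_gen_HV_prod_eq_UNIV: "(0, 0) \<in> T \<Longrightarrow> ideal_gen (HV_prod as bs ` T) = UNIV"
  by (metis HV_prod_0_0 ideal_gen_eq_UNIV ideal_gen_generator image_eqI)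

lemma HV_prod_Cons_Suc: "HV_prod (A # as) bs (Suc i, j) = Hform A * HV_prod as bs (i, j)"
  unfolding HV_prod_def fst_conv snd_conv prod.lessThan_Suc_shift nth_Cons_0 nth_Cons_Suc
  by (rule mult.assoc)

lemma HV_prod_Cons_0: "HV_prod (A # as) bs (0, j) = HV_prod as bs (0, j)"
  by (simp add: HV_prod_def)

lemma HV_prod_in_I_pt:
  assumes "a < fst t \<or> b < snd t"
  shows "HV_prod as bs t \<in> I_pt (as!a, bs!b)"
  using assms
proof (elim disjE)
  assume "a < fst t"
  then have "(\<Prod>k<fst t. Hform (as!k)) \<in> ideal_gen {Hform (as!a), Vform (bs!b)}"
    by (rule ideal_gen_prod_lessThan) simp
  then show ?thesis unfolding HV_prod_def I_pt_def by (simp add: ideal_gen_mult_right)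
next
  assume "b < snd t"
  then have "(\<Prod>k<snd t. Vform (bs!k)) \<in> ideal_gen {Hform (as!a), Vform (bs!b)}"
    by (rule ideal_gen_prod_lessThan) simp
  then show ?thesis unfolding HV_prod_def I_pt_def by (simp add: ideal_gen_mult_left)
qed

lemma ideal_gen_HV_prod_subset_I_X: "ideal_gen (HV_prod as bs ` T) \<subseteq> I_X (grid_zeros as bs T)"
  by (rule ideal_gen_minimal[OF is_ideal_I_X]) (auto simp: I_X_def grid_zeros_def intro!: HV_prod_in_I_pt)

lemma finite_grid_zeros: "finite (grid_zeros as bs T)"
proof -
  have "grid_zeros as bs T \<subseteq> (\<lambda>(a, b). (as!a, bs!b)) ` ({..<length as} \<times> {..<length bs})"
    unfolding grid_zeros_def by auto
  then show ?thesis by (rule finite_subset) simp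
qed

lemma grid_zeros_subset: "P \<in> grid_zeros as bs T \<Longrightarrow> fst P \<in> set as \<and> snd P \<in> set bs"
  unfolding grid_zeros_def by auto

text \<open>Peeling off the first row: the points of \<open>grid_zeros (A # as) bs T\<close> on the line \<open>H\<^sub>A\<close> are
  the \<open>(A, B\<^sub>b)\<close> with \<open>b < first_step T\<close>, and \<open>stair_tail T\<close> is the staircase of the other rows.\<close>

definition first_step :: "(nat \<times> nat) set \<Rightarrow> nat" where
  "first_step T = (LEAST j. (0, j) \<in> T)"

definition stair_tail :: "(nat \<times> nat) set \<Rightarrow> (nat \<times> nat) set" where
  "stair_tail T = {(i, j). (Suc i, j) \<in> T} \<union> {(0, first_step T)}"

lemma first_step_in: "(0, j) \<in> T \<Longrightarrow> (0, first_step T) \<in> T"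
  unfolding first_step_def by (rule LeastI)

lemma first_step_le: "(0, j) \<in> T \<Longrightarrow> first_step T \<le> j"
  unfolding first_step_def by (rule Least_le)

lemma is_staircase_tail:
  assumes "is_staircase (A # as) bs T" "first_step T \<noteq> 0"
  shows "is_staircase as bs (stair_tail T)"
proof -
  obtain i j where i: "(i, 0) \<in> T" and j: "(0, j) \<in> T"
    using assms(1) by (auto simp: is_staircase_def)
  with assms(2) obtain i' where "i = Suc i'"
    using first_step_le[of 0 T] by (cases i) auto
  then have "(i', 0) \<in> stair_tail T" using i by (simp add: stair_tail_def)
  moreover have "\<forall>t\<in>stair_tail T. fst t \<le> length as \<and> snd t \<le> length bs"
    using assms(1) first_step_in[OF j] by (fastforce simp: is_staircase_def stair_tail_def)
  ultimately show ?thesis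
    unfolding is_staircase_def stair_tail_def by blast
qed

lemma grid_zeros_tail_subset: "grid_zeros as bs (stair_tail T) \<subseteq> grid_zeros (A # as) bs T"
proof
  fix P assume "P \<in> grid_zeros as bs (stair_tail T)"
  then obtain a b where P: "P = (as!a, bs!b)" "a < length as" "b < length bs"
    and below: "\<And>t. t \<in> stair_tail T \<Longrightarrow> a < fst t \<or> b < snd t"
    unfolding grid_zeros_def by blast
  have "Suc a < i \<or> b < j" if "(i, j) \<in> T" for i j
  proof (cases i)
    case 0
    then show ?thesis
      using that first_step_le[of j T] below[of "(0, first_step T)"] by (simp add: stair_tail_def)
  next
    case (Suc i')
    then show ?thesis
      using that below[of "(i', j)"] by (simp add: stair_tail_def)
  qed
  then show "P \<in> grid_zeros (A # as) bs T"
    unfolding grid_zeros_def using P by (intro CollectI exI[of _ "Suc a"] exI[of _ b]) auto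
qed

lemma grid_zeros_first_row:
  assumes "is_staircase (A # as) bs T" "b < first_step T"
  shows "(A, bs!b) \<in> grid_zeros (A # as) bs T"
proof -
  obtain j where j: "(0, j) \<in> T" using assms(1) by (auto simp: is_staircase_def)
  then have "b < length bs"
    using assms first_step_in[OF j] by (fastforce simp: is_staircase_def)
  moreover have "0 < i \<or> b < j" if "(i, j) \<in> T" for i j
    using that first_step_le[of j T] assms(2) by (cases i) auto
  ultimately show ?thesis
    unfolding grid_zeros_def by (intro CollectI exI[of _ 0] exI[of _ b]) auto
qed

lemma ideal_gen_HV_prod_Cons:
  assumes "(0, j) \<in> T"
  shows "ideal_gen (HV_prod (A # as) bs ` T) =
    {Hform A * q + r * HV_prod as bs (0, first_step T) | q r. q \<in> ideal_gen (HV_prod as bs ` stair_tail T)}"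
    (is "?J = ?K")
proof
  let ?J' = "ideal_gen (HV_prod as bs ` stair_tail T)"
  let ?Vp = "HV_prod as bs (0, first_step T)"
  have "is_ideal ?K"
    by (rule is_ideal_mult_add_principal[OF ideal_gen_is_ideal])
  moreover have "HV_prod (A # as) bs t \<in> ?K" if "t \<in> T" for t
  proof (cases t)
    case (Pair i j)
    show ?thesis
    proof (cases i)
      case 0
      then have "first_step T \<le> j" using that Pair first_step_le by blast
      then have "HV_prod (A # as) bs t = Hform A * 0 + (\<Prod>k\<in>{first_step T..<j}. Vform (bs!k)) * ?Vp"
        using Pair 0 prod.atLeastLessThan_concat[of 0 "first_step T" j "\<lambda>k. Vform (bs!k)"]
        by (simp add: HV_prod_def atLeast0LessThan mult.commute)
      then show ?thesis using ideal_gen_0 by blast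
    next
      case (Suc i')
      then have "HV_prod (A # as) bs t = Hform A * HV_prod as bs (i', j) + 0 * ?Vp"
        using Pair by (simp add: HV_prod_Cons_Suc)
      moreover have "HV_prod as bs (i', j) \<in> ?J'"
        using that Pair Suc by (intro ideal_gen_generator) (simp add: stair_tail_def)
      ultimately show ?thesis by blast
    qed
  qed
  ultimately show "?J \<subseteq> ?K" by (intro ideal_gen_minimal) auto
next
  let ?J' = "ideal_gen (HV_prod as bs ` stair_tail T)"
  have T0: "(0, first_step T) \<in> T" by (rule first_step_in[OF assms])
  have T0J: "HV_prod as bs (0, first_step T) \<in> ?J"
    using T0 HV_prod_Cons_0[of A as bs] by (metis ideal_gen_generator image_eqI)
  have "(*) (Hform A) ` HV_prod as bs ` stair_tail T \<subseteq> ?J"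
  proof clarify
    fix i j assume "(i, j) \<in> stair_tail T"
    then consider "(Suc i, j) \<in> T" | "i = 0" "j = first_step T"
      by (auto simp: stair_tail_def)
    then show "Hform A * HV_prod as bs (i, j) \<in> ?J"
    proof cases
      case 1
      then have "HV_prod (A # as) bs (Suc i, j) \<in> ?J" by (simp add: ideal_gen_generator)
      then show ?thesis by (simp add: HV_prod_Cons_Suc)
    qed (use T0J in \<open>simp add: ideal_gen_mult_left\<close>)
  qed
  then have "(*) (Hform A) ` ?J' \<subseteq> ?J"
    unfolding ideal_gen_image_mult[symmetric] by (intro ideal_gen_minimal ideal_gen_is_ideal)
  then show "?K \<subseteq> ?J"
    using T0J by (blast intro: ideal_gen_add ideal_gen_mult_left)
qed

lemma I_X_grid_zeros_subset_Cons:
  assumes "A \<notin> set as" "distinct bs" "is_staircase (A # as) bs T"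
    and IH: "I_X (grid_zeros as bs (stair_tail T)) \<subseteq> ideal_gen (HV_prod as bs ` stair_tail T)"
  shows "I_X (grid_zeros (A # as) bs T) \<subseteq> ideal_gen (HV_prod (A # as) bs ` T)"
proof
  let ?J = "ideal_gen (HV_prod (A # as) bs ` T)"
  define j0 where "j0 = first_step T"
  define Vp where "Vp = (\<Prod>k<j0. Vform (bs!k))"
  obtain j where j: "(0, j) \<in> T" using assms(3) by (auto simp: is_staircase_def)
  then have "(0, j0) \<in> T" unfolding j0_def by (rule first_step_in)
  then have "j0 \<le> length bs" using assms(3) by (auto simp: is_staircase_def)
  fix p assume p: "p \<in> I_X (grid_zeros (A # as) bs T)"
  have "p \<in> ideal_gen {Hform A, Vp}"
    unfolding Vp_def
  proof (rule mem_ideal_gen_H_Vprod[OF assms(2) \<open>j0 \<le> length bs\<close>])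
    fix k assume "k < j0"
    then have "(A, bs!k) \<in> grid_zeros (A # as) bs T"
      using grid_zeros_first_row[OF assms(3)] by (simp add: j0_def)
    then show "p \<in> I_pt (A, bs!k)" using p by (simp add: I_X_def)
  qed
  then obtain q c where pqc: "p = q * Hform A + c * Vp"
    unfolding ideal_gen_pair by blast
  have "Vp = HV_prod (A # as) bs (0, j0)" by (simp add: Vp_def HV_prod_def)
  then have "Vp \<in> ?J"
    using \<open>(0, j0) \<in> T\<close> by (simp add: ideal_gen_generator)
  then have "Vp \<in> I_X (grid_zeros (A # as) bs T)"
    using ideal_gen_HV_prod_subset_I_X by blast
  moreover have "Hform A * q = p - c * Vp" by (simp add: pqc mult.commute)
  ultimately have "Hform A * q \<in> I_X (grid_zeros (A # as) bs T)"
    using p by (simp add: ideal_diff ideal_mult_left is_ideal_I_X)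
  then have "Hform A * q \<in> I_X (grid_zeros as bs (stair_tail T))"
    using I_X_antimono[OF grid_zeros_tail_subset] by blast
  moreover have "Hform A \<notin> I_pt P" if "P \<in> grid_zeros as bs (stair_tail T)" for P
    using grid_zeros_subset[OF that] assms(1) by (auto simp: Hform_in_I_pt_iff)
  ultimately have "q \<in> I_X (grid_zeros as bs (stair_tail T))"
    by (blast intro: I_X_mult_cancel)
  moreover have "Vp = HV_prod as bs (0, first_step T)"
    by (simp add: Vp_def HV_prod_def j0_def)
  ultimately have "Hform A * q + c * Vp \<in> ?J"
    using IH unfolding ideal_gen_HV_prod_Cons[OF j] by blast
  then show "p \<in> ?J" by (simp add: pqc mult.commute)
qed

lemma I_X_grid_zeros_subset:
  assumes "distinct as" "distinct bs" "is_staircase as bs T"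
  shows "I_X (grid_zeros as bs T) \<subseteq> ideal_gen (HV_prod as bs ` T)"
  using assms
proof (induction as arbitrary: T)
  case Nil
  then have "(0, 0) \<in> T" by (auto simp: is_staircase_def)
  then show ?case by (simp add: ideal_gen_HV_prod_eq_UNIV)
next
  case (Cons A as)
  then obtain j where "(0, j) \<in> T" by (auto simp: is_staircase_def)
  show ?case
  proof (cases "first_step T = 0")
    case True
    then show ?thesis
      using first_step_in[OF \<open>(0, j) \<in> T\<close>] by (simp add: ideal_gen_HV_prod_eq_UNIV)
  next
    case False
    then show ?thesis
      using Cons is_staircase_tail[OF Cons.prems(3)] by (intro I_X_grid_zeros_subset_Cons) auto
  qed
qed

theorem I_X_grid_zeros:
  assumes "distinct as" "distinct bs" "is_staircase as bs T"
  shows "I_X (grid_zeros as bs T) = ideal_gen (HV_prod as bs ` T)"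
  using I_X_grid_zeros_subset[OF assms] ideal_gen_HV_prod_subset_I_X by blast

lemma Vform_mult_cancel_step:
  assumes "distinct bs" "j0 \<le> length bs" "A \<noteq> C" "D \<notin> set bs"
    and Vp: "(\<Prod>k<j0. Vform (bs!k)) \<in> ideal_gen S"
    and g: "Vform D * g = Hform A * q + r * (\<Prod>k<j0. Vform (bs!k)) + c * Hform C"
    and q: "q \<in> ideal_gen S"
  obtains g1 g2 g3 where "g = Hform A * g1 + g2 * (\<Prod>k<j0. Vform (bs!k)) + g3 * Hform C"
    and "Vform D * g1 \<in> ideal_gen (insert (Hform C) S)"
proof -
  define Vp where "Vp = (\<Prod>k<j0. Vform (bs!k))"
  have "Vform D * g = q * Hform A + c * Hform C + r * Vp"
    using g by (simp add: Vp_def algebra_simps)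
  then have "Vform D * g \<in> ideal_gen {Hform A, Hform C, Vp}"
    unfolding ideal_gen_triple by blast
  then have "g \<in> ideal_gen {Hform A, Hform C, Vp}"
    unfolding Vp_def by (rule Vform_mult_cancel_HH_Vprod[OF assms(1-4)])
  then obtain g1 g2 g3 where g123: "g = g1 * Hform A + g3 * Hform C + g2 * Vp"
    unfolding ideal_gen_triple by blast
  have "Hform A * (Vform D * g1 - q) = (c - Vform D * g3) * Hform C + (r - Vform D * g2) * Vp"
    using g g123 by (simp add: Vp_def algebra_simps)
  then have "Hform A * (Vform D * g1 - q) \<in> ideal_gen {Hform C, Vp}"
    unfolding ideal_gen_pair by blast
  then have "Vform D * g1 - q \<in> ideal_gen {Hform C, Vp}"
    unfolding Vp_def by (rule Hform_mult_cancel_H_Vprod[OF assms(1-3)])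
  then obtain e f where "Vform D * g1 - q = e * Hform C + f * Vp"
    unfolding ideal_gen_pair by blast
  then have "Vform D * g1 = (q + f * Vp) + e * Hform C"
    by (simp add: algebra_simps)
  moreover have "q + f * Vp \<in> ideal_gen S"
    using q Vp by (simp add: Vp_def ideal_gen_add ideal_gen_mult_left)
  ultimately have "Vform D * g1 \<in> ideal_gen (insert (Hform C) S)"
    unfolding ideal_gen_insert by blast
  moreover have "g = Hform A * g1 + g2 * Vp + g3 * Hform C"
    using g123 by (simp add: algebra_simps)
  ultimately show ?thesis using that by (simp add: Vp_def)
qed

lemma Vform_mult_cancel_mod_Hform_Cons:
  assumes "distinct bs" "is_staircase (A # as) bs T" "A \<noteq> C" "D \<notin> set bs"
    and IH: "\<And>g. Vform D * g \<in> ideal_gen (insert (Hform C) (HV_prod as bs ` stair_tail T)) \<Longrightarrow>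
      g \<in> ideal_gen (insert (Hform C) (HV_prod as bs ` stair_tail T))"
    and "Vform D * g \<in> ideal_gen (insert (Hform C) (HV_prod (A # as) bs ` T))"
  shows "g \<in> ideal_gen (insert (Hform C) (HV_prod (A # as) bs ` T))"
proof -
  let ?S = "HV_prod (A # as) bs ` T"
  let ?S' = "HV_prod as bs ` stair_tail T"
  define j0 where "j0 = first_step T"
  define Vp where "Vp = (\<Prod>k<j0. Vform (bs!k))"
  obtain j where j: "(0, j) \<in> T" using assms(2) by (auto simp: is_staircase_def)
  then have "(0, j0) \<in> T" unfolding j0_def by (rule first_step_in)
  then have "j0 \<le> length bs" using assms(2) by (auto simp: is_staircase_def)
  have Vp: "Vp = HV_prod as bs (0, j0)" by (simp add: Vp_def HV_prod_def)
  then have "Vp \<in> ideal_gen ?S'"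
    by (intro ideal_gen_generator) (simp add: stair_tail_def j0_def)
  have J: "ideal_gen ?S = {Hform A * q + r * Vp | q r. q \<in> ideal_gen ?S'}"
    unfolding Vp j0_def by (rule ideal_gen_HV_prod_Cons[OF j])
  obtain k c where "Vform D * g = k + c * Hform C" "k \<in> ideal_gen ?S"
    using assms(6) unfolding ideal_gen_insert by blast
  then obtain q r where "Vform D * g = Hform A * q + r * Vp + c * Hform C" "q \<in> ideal_gen ?S'"
    unfolding J by blast
  then obtain g1 g2 g3 where g: "g = Hform A * g1 + g2 * Vp + g3 * Hform C"
    and "Vform D * g1 \<in> ideal_gen (insert (Hform C) ?S')"
    using Vform_mult_cancel_step[OF assms(1) \<open>j0 \<le> length bs\<close> assms(3,4)] \<open>Vp \<in> ideal_gen ?S'\<close>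
    unfolding Vp_def by metis
  then obtain k' e where "g1 = k' + e * Hform C" "k' \<in> ideal_gen ?S'"
    using IH unfolding ideal_gen_insert by blast
  then have "g = (Hform A * k' + g2 * Vp) + (Hform A * e + g3) * Hform C"
    "Hform A * k' + g2 * Vp \<in> ideal_gen ?S"
    unfolding J using g by (simp add: algebra_simps, blast)
  then show ?thesis unfolding ideal_gen_insert by blast
qed

lemma Vform_mult_cancel_mod_Hform:
  assumes "distinct as" "distinct bs" "is_staircase as bs T" "C \<notin> set as" "D \<notin> set bs"
    and "Vform D * g \<in> ideal_gen (insert (Hform C) (HV_prod as bs ` T))"
  shows "g \<in> ideal_gen (insert (Hform C) (HV_prod as bs ` T))"
  using assms
proof (induction as arbitrary: T g)
  case Nil
  then have "(0, 0) \<in> T" by (auto simp: is_staircase_def)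
  then show ?case
    using ideal_gen_mono[of "HV_prod [] bs ` T" "insert (Hform C) (HV_prod [] bs ` T)"]
    by (auto simp: ideal_gen_HV_prod_eq_UNIV)
next
  case (Cons A as)
  then obtain j where "(0, j) \<in> T" by (auto simp: is_staircase_def)
  show ?case
  proof (cases "first_step T = 0")
    case True
    then have "(0, 0) \<in> T" using first_step_in[OF \<open>(0, j) \<in> T\<close>] by simp
    then show ?thesis
      using ideal_gen_mono[of "HV_prod (A # as) bs ` T" "insert (Hform C) (HV_prod (A # as) bs ` T)"]
      by (auto simp: ideal_gen_HV_prod_eq_UNIV)
  next
    case False
    show ?thesis
    proof (rule Vform_mult_cancel_mod_Hform_Cons[OF Cons.prems(2,3) _ Cons.prems(5) _ Cons.prems(6)])
      show "A \<noteq> C" using Cons.prems(4) by auto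
      show "g \<in> ideal_gen (insert (Hform C) (HV_prod as bs ` stair_tail T))"
        if "Vform D * g \<in> ideal_gen (insert (Hform C) (HV_prod as bs ` stair_tail T))" for g
        using Cons.IH[OF _ _ is_staircase_tail[OF Cons.prems(3) False] _ _ that] Cons.prems(1,2,4,5) by simp
    qed
  qed
qed

lemma infinite_UNIV_p1: "infinite (UNIV :: p1 set)"
  by (simp add: infinite_UNIV_char_0)

theorem ACM_grid_zeros:
  assumes "distinct as" "distinct bs" "is_staircase as bs T"
  shows "ACM (grid_zeros as bs T)"
proof (cases "grid_zeros as bs T = {}")
  case False
  let ?Y = "grid_zeros as bs T"
  obtain C where C: "C \<notin> set as" using ex_new_if_finite[OF infinite_UNIV_p1] by blast
  obtain D where D: "D \<notin> set bs" using ex_new_if_finite[OF infinite_UNIV_p1] by blast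
  obtain P0 where "P0 \<in> ?Y" using False by blast
  have "regular_seq2 (I_X ?Y) (Hform C) (Vform D)"
    unfolding regular_seq2_def
  proof (intro conjI allI impI)
    show "Hform C \<in> irrel" "Vform D \<in> irrel"
      by (simp_all add: Hform_in_irrel Vform_in_irrel)
  next
    fix g assume "Hform C * g \<in> I_X ?Y"
    moreover have "Hform C \<notin> I_pt P" if "P \<in> ?Y" for P
      using grid_zeros_subset[OF that] C by (auto simp: Hform_in_I_pt_iff)
    ultimately show "g \<in> I_X ?Y" by (blast intro: I_X_mult_cancel)
  next
    have eq: "ideal_gen (I_X ?Y \<union> {Hform C}) = ideal_gen (insert (Hform C) (HV_prod as bs ` T))"
      using I_X_grid_zeros[OF assms] ideal_gen_insert_ideal_gen by simp
    fix g assume "Vform D * g \<in> ideal_gen (I_X ?Y \<union> {Hform C})"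
    then show "g \<in> ideal_gen (I_X ?Y \<union> {Hform C})"
      unfolding eq by (rule Vform_mult_cancel_mod_Hform[OF assms C D])
  next
    have "I_X ?Y \<subseteq> irrel"
      using I_X_subset_I_pt[OF \<open>P0 \<in> ?Y\<close>] I_pt_subset_irrel by blast
    then have "ideal_gen (I_X ?Y \<union> {Hform C, Vform D}) \<subseteq> irrel"
      using Hform_in_irrel Vform_in_irrel by (intro ideal_gen_minimal is_ideal_irrel) auto
    then show "1 \<notin> ideal_gen (I_X ?Y \<union> {Hform C, Vform D})"
      using one_notin_irrel by blast
  qed
  then show ?thesis unfolding ACM_def using finite_grid_zeros by blast
qed (simp add: ACM_def)

section \<open>Subsets of the standard generators\<close>

lemma prod_lessThan_add:
  fixes m d :: nat
  shows "(\<Prod>k<m + d. f k) = (\<Prod>k<m. f k) * (\<Prod>k<d. f (m + k) :: 'a::comm_monoid_mult)"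
  by (induction d) (simp_all add: mult.assoc)

lemma HV_prod_split:
  assumes "m \<le> fst t" "n \<le> snd t" "m \<le> length as" "n \<le> length bs"
  shows "HV_prod as bs t = HV_prod as bs (m, n) * HV_prod (drop m as) (drop n bs) (fst t - m, snd t - n)"
proof -
  have "(\<Prod>k<fst t. Hform (as!k)) = (\<Prod>k<m. Hform (as!k)) * (\<Prod>k<fst t - m. Hform (drop m as ! k))"
    using prod_lessThan_add[of "\<lambda>k. Hform (as!k)" m "fst t - m"] assms(1,3) by simp
  moreover have "(\<Prod>k<snd t. Vform (bs!k)) = (\<Prod>k<n. Vform (bs!k)) * (\<Prod>k<snd t - n. Vform (drop n bs ! k))"
    using prod_lessThan_add[of "\<lambda>k. Vform (bs!k)" n "snd t - n"] assms(2,4) by simp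
  ultimately show ?thesis unfolding HV_prod_def by (simp add: mult_ac)
qed

lemma prod_set_take:
  assumes "distinct xs" "m \<le> length xs"
  shows "(\<Prod>x\<in>set (take m xs). f x) = (\<Prod>k<m. f (xs!k))"
proof -
  have "set (take m xs) = (!) xs ` {..<m}"
    using nth_image[OF assms(2)] by (simp add: atLeast0LessThan)
  moreover have "inj_on ((!) xs) {..<m}" using assms by (intro inj_on_nth) auto
  ultimately show ?thesis by (simp add: prod.reindex)
qed

lemma is_staircase_shift:
  assumes "finite T" "T \<noteq> {}" "\<And>t. t \<in> T \<Longrightarrow> fst t \<le> length as \<and> snd t \<le> length bs"
    and "im = Min (fst ` T)" "jm = Min (snd ` T)"
  shows "is_staircase (drop im as) (drop jm bs) ((\<lambda>t. (fst t - im, snd t - jm)) ` T)"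
proof -
  have "im \<in> fst ` T" "jm \<in> snd ` T"
    using assms(1,2,4,5) by simp_all
  then obtain ti tj where "ti \<in> T" "fst ti = im" "tj \<in> T" "snd tj = jm"
    by blast
  show ?thesis
    unfolding is_staircase_def
    using assms(3) \<open>ti \<in> T\<close> \<open>fst ti = im\<close> \<open>tj \<in> T\<close> \<open>snd tj = jm\<close> by (force intro: diff_le_mono)
qed

lemma Lambda_add_take_lines:
  assumes "finite (hlines W)" "finite (vlines W)" "distinct as" "distinct bs"
    and "set as \<inter> hlines W = {}" "set bs \<inter> vlines W = {}" "m \<le> length as" "n \<le> length bs"
  shows "Lambda \<lparr>pts = Y, hlines = hlines W \<union> set (take m as), vlines = vlines W \<union> set (take n bs)\<rparr> =
    Lambda W * HV_prod as bs (m, n)"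
proof -
  have dh: "hlines W \<inter> set (take m as) = {}" and dv: "vlines W \<inter> set (take n bs) = {}"
    using assms(5,6) set_take_subset[of m as] set_take_subset[of n bs] by blast+
  have "(\<Prod>A\<in>hlines W \<union> set (take m as). Hform A) = (\<Prod>A\<in>hlines W. Hform A) * (\<Prod>k<m. Hform (as!k))"
    unfolding prod.union_disjoint[OF assms(1) finite_set dh] prod_set_take[OF assms(3,7)] ..
  moreover have "(\<Prod>B\<in>vlines W \<union> set (take n bs). Vform B) = (\<Prod>B\<in>vlines W. Vform B) * (\<Prod>k<n. Vform (bs!k))"
    unfolding prod.union_disjoint[OF assms(2) finite_set dv] prod_set_take[OF assms(4,8)] ..
  ultimately show ?thesis
    by (simp add: Lambda_def HV_prod_def mult_ac)
qed

theorem ideal_gen_Lambda_HV_prod: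
  assumes "finite (hlines W)" "finite (vlines W)"
    and "distinct as" "distinct bs" "set as \<inter> hlines W = {}" "set bs \<inter> vlines W = {}"
    and "finite T" "T \<noteq> {}" "\<And>t. t \<in> T \<Longrightarrow> fst t \<le> length as \<and> snd t \<le> length bs"
  shows "\<exists>W'. is_ULACM W' \<and> ideal_gen ((\<lambda>t. Lambda W * HV_prod as bs t) ` T) = I_W W'"
proof -
  define im where "im = Min (fst ` T)"
  define jm where "jm = Min (snd ` T)"
  define shift where "shift t = (fst t - im, snd t - jm)" for t :: "nat \<times> nat"
  let ?as = "drop im as" and ?bs = "drop jm bs" and ?T = "shift ` T"
  define W' where "W' = \<lparr>pts = grid_zeros ?as ?bs ?T,
    hlines = hlines W \<union> set (take im as), vlines = vlines W \<union> set (take jm bs)\<rparr>"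
  have min: "im \<le> fst t" "jm \<le> snd t" if "t \<in> T" for t
    using that assms(7) by (simp_all add: im_def jm_def)
  obtain t0 where "t0 \<in> T" using assms(8) by blast
  then have "im \<le> length as" "jm \<le> length bs"
    using min assms(9) by (meson le_trans)+
  have stair: "is_staircase ?as ?bs ?T"
    unfolding shift_def using assms(7-9) im_def jm_def by (rule is_staircase_shift)
  have "fst P \<notin> hlines W \<union> set (take im as) \<and> snd P \<notin> vlines W \<union> set (take jm bs)"
    if "P \<in> grid_zeros ?as ?bs ?T" for P
  proof -
    have "fst P \<in> set ?as" "snd P \<in> set ?bs" using grid_zeros_subset[OF that] by auto
    then show ?thesis
      using assms(5,6) set_take_disj_set_drop_if_distinct[OF assms(3) le_refl, of im]
        set_take_disj_set_drop_if_distinct[OF assms(4) le_refl, of jm]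
      by (blast dest: in_set_dropD)
  qed
  then have "is_ULP W'"
    using assms(1,2) by (simp add: is_ULP_def W'_def finite_grid_zeros)
  moreover have "ACM (pts W')"
    unfolding W'_def using ACM_grid_zeros[OF _ _ stair] assms(3,4) by simp
  ultimately have "is_ULACM W'" by (simp add: is_ULACM_def)
  have "(\<lambda>t. Lambda W * HV_prod as bs t) ` T = (*) (Lambda W') ` HV_prod ?as ?bs ` ?T"
    using HV_prod_split[OF min \<open>im \<le> length as\<close> \<open>jm \<le> length bs\<close>]
      Lambda_add_take_lines[OF assms(1-6) \<open>im \<le> length as\<close> \<open>jm \<le> length bs\<close>]
    by (force simp: W'_def shift_def mult.assoc)
  then have "ideal_gen ((\<lambda>t. Lambda W * HV_prod as bs t) ` T) =
      (*) (Lambda W') ` ideal_gen (HV_prod ?as ?bs ` ?T)"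
    by (simp add: ideal_gen_image_mult)
  also have "ideal_gen (HV_prod ?as ?bs ` ?T) = I_X (pts W')"
    using I_X_grid_zeros[OF _ _ stair] assms(3,4) by (simp add: W'_def)
  also have "(*) (Lambda W') ` I_X (pts W') = I_W W'"
    using I_W_eq_Lambda_mult[OF \<open>is_ULP W'\<close>] by simp
  finally show ?thesis using \<open>is_ULACM W'\<close> by blast
qed

definition std_exponents :: "(p1 \<times> p1) set \<Rightarrow> p1 list \<Rightarrow> p1 list \<Rightarrow> (nat \<times> nat) set" where
  "std_exponents X as bs = {(length as, 0), (0, length bs)} \<union>
     {(i, row_count X (as!i)) | i. 1 \<le> i \<and> i < length as \<and> row_count X (as!i) < row_count X (as!(i-1))}"

lemma gens_X_eq_image: "gens_X X as bs = HV_prod as bs ` std_exponents X as bs"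
proof -
  have "HV_prod as bs ` {(i, row_count X (as!i)) | i. P i} =
      {HV_prod as bs (i, row_count X (as!i)) | i. P i}"
    for P by blast
  then show ?thesis
    unfolding gens_X_def std_exponents_def image_Un image_insert image_empty by (simp add: HV_prod_def)
qed

lemma std_gens_eq_image: "std_gens W as bs = (\<lambda>t. Lambda W * HV_prod as bs t) ` std_exponents (pts W) as bs"
  unfolding std_gens_def gens_X_eq_image image_image ..

lemma row_count_le_card: "finite X \<Longrightarrow> row_count X A \<le> card (snd ` X)"
  unfolding row_count_def
  by (rule card_inj_on_le[of snd]) (auto simp: inj_on_def prod_eq_iff)

lemma std_exponents_bounded:
  assumes "finite X" "valid_labelling X as bs" "t \<in> std_exponents X as bs"
  shows "fst t \<le> length as \<and> snd t \<le> length bs"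
proof -
  have "length bs = card (snd ` X)"
    using assms(2) distinct_card[of bs] by (simp add: valid_labelling_def)
  then show ?thesis
    using assms(3) row_count_le_card[OF assms(1)] by (auto simp: std_exponents_def)
qed

theorem theorem4p5:
  fixes W :: ULP and as bs :: "p1 list" and S :: "R set"
  assumes "is_ULACM W"
    and "valid_labelling (pts W) as bs"
    and "S \<subseteq> std_gens W as bs"
    and "S \<noteq> {}"
  shows "\<exists>W' :: ULP. is_ULACM W' \<and> ideal_gen S = I_W W'"
proof -
  \<comment> \<open>The points of \<open>W\<close> need not be ACM: the new points are, whatever the old ones are.\<close>
  have W: "is_ULP W" using assms(1) by (simp add: is_ULACM_def)
  obtain T where T: "T \<subseteq> std_exponents (pts W) as bs" and S: "S = (\<lambda>t. Lambda W * HV_prod as bs t) ` T"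
    using assms(3) unfolding std_gens_eq_image subset_image_iff by blast
  have "finite (pts W)" using W by (simp add: is_ULP_def)
  then have bounded: "fst t \<le> length as \<and> snd t \<le> length bs" if "t \<in> T" for t
    using std_exponents_bounded[OF _ assms(2)] T that by blast
  then have "finite T"
    by (intro finite_subset[of T "{..length as} \<times> {..length bs}"]) (auto simp: mem_Times_iff)
  moreover have "set as \<inter> hlines W = {}" "set bs \<inter> vlines W = {}"
    using W assms(2) by (auto simp: is_ULP_def valid_labelling_def)
  ultimately show ?thesis
    unfolding S using assms(2,4) W bounded
    by (intro ideal_gen_Lambda_HV_prod) (auto simp: is_ULP_def valid_labelling_def S)
qed

end
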